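(* For all $Q\in(0,1)$, $z>0$ and $y\in(0,1]$, $$\sum_{m\in\mathbb{Z}} Q^{\frac{m(m+1)}{2}}z^m=Z(Q,z,y)\prod_{i=1}^\infty\frac{1-Q^i}{1+(y-1)Q^i},$$ where $$Z(Q,z,y) = 1 + \sum_{\substack{L,R\geq0\\ L+R>0}}y^{L+R} \sum_{\substack{\ell_1,\dots,\ell_L\geq 1 \\ m_1,\dots,m_{R}\geq 1}}\prod_{j=1}^{L} \frac{Q^{\frac12 \ell_j(\ell_j-1)+j\ell_j+\ell_{j-1}(\ell_j+\cdots+\ell_{L})}z^{-\ell_j}}{1-Q^{\ell_j+\cdots + \ell_{L}}}\prod_{j=1}^{R}\frac{Q^{\frac12 m_j(m_j-1)+jm_j+m_{j-1}(m_{j}+\cdots+m_{R})}z^{m_j}}{1-Q^{m_{j}+\cdots+m_{R}}}\Big(\big(1-y^{-1}\big)Q^{\ell_1+\cdots + \ell_L}Q^{m_{1}+\cdots+m_{R}} + y^{-1}\Big),$$ with the conventions $\ell_0=-1$ and $m_0=0$.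
   Context: In the sum defining $Z(Q,z,y)$, $L$ and $R$ range over nonnegative integers with $L+R>0$, and for given $L,R$ the inner sum ranges over all tuples of positive integers $(\ell_1,\dots,\ell_L)$ and $(m_1,\dots,m_R)$; an empty product equals $1$ (so e.g. when $L=0$ the first product is $1$ and $\ell_1+\cdots+\ell_L=0$). *)

theory Defs
  imports "HOL-Analysis.Analysis"
begin

text \<open>The list xs = [x_1,...,x_K] (0-based in Isabelle: x_j = xs!(j-1)),
  c is the convention value x_0, and e is the sign of the exponent of z
  (e = -1 for the l-product, e = 1 for the m-product).\<close>
definition zblock :: "real \<Rightarrow> real \<Rightarrow> real \<Rightarrow> real \<Rightarrow> nat list \<Rightarrow> real" where
  "zblock Q z c e xs =
     (\<Prod>j\<in>{1..length xs}.
        let x = real (xs ! (j - 1));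
            prev = (if j = 1 then c else real (xs ! (j - 2)));
            t = sum_list (drop (j - 1) xs)
        in Q powr (x * (x - 1) / 2 + real j * x + prev * real t) * z powr (e * x)
           / (1 - Q ^ t))"

definition zindex :: "(nat list \<times> nat list) set" where
  "zindex = {(ls, ms). (\<forall>l\<in>set ls. 1 \<le> l) \<and> (\<forall>m\<in>set ms. 1 \<le> m)
                       \<and> 0 < length ls + length ms}"

definition zterm :: "real \<Rightarrow> real \<Rightarrow> real \<Rightarrow> nat list \<times> nat list \<Rightarrow> real" where
  "zterm Q z y p = (case p of (ls, ms) \<Rightarrow>
      y ^ (length ls + length ms) * zblock Q z (-1) (-1) ls * zblock Q z 0 1 ms
      * ((1 - 1 / y) * Q ^ (sum_list ls + sum_list ms) + 1 / y))"

definition Zfun :: "real \<Rightarrow> real \<Rightarrow> real \<Rightarrow> real" where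
  "Zfun Q z y = 1 + (\<Sum>\<^sub>\<infinity>p\<in>zindex. zterm Q z y p)"

end

(*
  In each product of Z the exponents of Q telescope: a tuple x with total N contributes
  Q^(N(N-1)/2 + cN) z^(eN) times the product of Q^t/(1 - Q^t) over its tail sums t.  Summing
  y^(length x) times this product over all compositions x of N gives Q^N (1-y;Q)_N / (Q;Q)_N,
  so Z becomes a double sum over the totals (N, M).  Along a diagonal M - N = k this is the
  very-well-poised series
    S(b) = sum_n (bq;q)_(n-1) (1 - b q^(2n)) (bq/c;q)_n q^(n(n-1)) c^n / ((q;q)_n (c;q)_n)
  with q = Q, c = Q^(|k|+1), b = (1-y) Q^|k|.  A telescoping certificate gives
  S(b) = (1 - bq) S(bq); together with S(c/q) = 1 and continuity at b = 0 this yields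
  S(b) = (bq;q)_oo / (c;q)_oo.  Hence the diagonal k contributes Q^(k(k+1)/2) z^k P with
  P = prod_i (1 - (1-y) Q^i) / (1 - Q^i), and Z = P * sum_k Q^(k(k+1)/2) z^k.
*)

theory Submission
  imports Defs
begin

definition qpoch :: "'a::comm_ring_1 \<Rightarrow> 'a \<Rightarrow> nat \<Rightarrow> 'a" where
  "qpoch a q n = (\<Prod>i<n. 1 - a * q ^ i)"

lemma qpoch_0 [simp]: "qpoch a q 0 = 1"
  by (simp add: qpoch_def)

lemma qpoch_zero_left [simp]: "qpoch 0 q n = 1"
  by (simp add: qpoch_def)

lemma qpoch_Suc: "qpoch a q (Suc n) = qpoch a q n * (1 - a * q ^ n)"
  by (simp add: qpoch_def)

lemma qpoch_Suc_shift: "qpoch a q (Suc n) = (1 - a) * qpoch (a * q) q n"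
  unfolding qpoch_def by (subst prod.lessThan_Suc_shift) (simp add: mult.assoc)

lemma qpoch_add: "qpoch a q (m + n) = qpoch a q m * qpoch (a * q ^ m) q n"
  by (induction n) (simp_all add: qpoch_Suc power_add algebra_simps)

lemma mult_power_less_one:
  fixes a q :: "'a::linordered_idom"
  assumes "0 \<le> a" "a < 1" "0 \<le> q" "q \<le> 1"
  shows "a * q ^ n < 1"
proof -
  have "a * q ^ n \<le> a" using assms by (simp add: mult_left_le power_le_one)
  then show ?thesis using assms by linarith
qed

lemma qpoch_pos:
  fixes a q :: "'a::linordered_idom"
  assumes "0 \<le> a" "a < 1" "0 \<le> q" "q \<le> 1"
  shows "0 < qpoch a q n"
  unfolding qpoch_def using mult_power_less_one[OF assms] by (simp add: prod_pos)

lemma prod_one_minus_ge_one_minus_sum: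
  fixes u :: "'a \<Rightarrow> 'b::linordered_idom"
  assumes "\<And>i. i \<in> A \<Longrightarrow> 0 \<le> u i \<and> u i \<le> 1"
  shows "1 - (\<Sum>i\<in>A. u i) \<le> (\<Prod>i\<in>A. 1 - u i)"
  using assms
proof (induction A rule: infinite_finite_induct)
  case (insert i A)
  have "0 \<le> (\<Prod>i\<in>A. 1 - u i)" "(\<Prod>i\<in>A. 1 - u i) \<le> 1"
    using insert.prems by (auto intro: prod_nonneg prod_le_1)
  moreover have "0 \<le> u i" "1 - (\<Sum>i\<in>A. u i) \<le> (\<Prod>i\<in>A. 1 - u i)"
    using insert by auto
  ultimately have "(\<Prod>i\<in>A. 1 - u i) - u i \<le> (\<Prod>i\<in>A. 1 - u i) * (1 - u i)"
    by (simp add: algebra_simps mult_left_le)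
  with insert show ?case by (simp add: algebra_simps)
qed simp_all

lemma qpoch_bounds:
  fixes a q :: real
  assumes "0 \<le> a" "a \<le> 1" "0 \<le> q" "q < 1"
  shows "0 \<le> qpoch a q n" "qpoch a q n \<le> 1" "1 - a / (1 - q) \<le> qpoch a q n"
proof -
  have u: "0 \<le> a * q ^ i \<and> a * q ^ i \<le> 1" for i
    using assms by (simp add: mult_le_one power_le_one)
  then show "0 \<le> qpoch a q n" "qpoch a q n \<le> 1"
    unfolding qpoch_def by (auto intro: prod_nonneg prod_le_1)
  have "(\<Sum>i<n. q ^ i) \<le> (\<Sum>i. q ^ i)"
    using assms by (intro sum_le_suminf) (auto intro: summable_geometric)
  also have "\<dots> = 1 / (1 - q)"
    using assms by (simp add: suminf_geometric)
  finally have "(\<Sum>i<n. a * q ^ i) \<le> a / (1 - q)"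
    using mult_left_mono[OF _ assms(1)] by (fastforce simp: sum_distrib_left[symmetric])
  then show "1 - a / (1 - q) \<le> qpoch a q n"
    using prod_one_minus_ge_one_minus_sum[of "{..<n}" "\<lambda>i. a * q ^ i"] u
    unfolding qpoch_def by force
qed

lemma add_minus_one_le_mult:
  fixes a b :: "'a::linordered_idom"
  assumes "a \<le> 1" "b \<le> 1"
  shows "a + b - 1 \<le> a * b"
proof -
  have "0 \<le> (1 - a) * (1 - b)" using assms by simp
  then show ?thesis by (simp add: algebra_simps)
qed

lemma summable_ratio_tendsto_zero:
  fixes f :: "nat \<Rightarrow> 'a::banach"
  assumes "\<And>n. norm (f (Suc n)) \<le> r n * norm (f n)" "r \<longlonglongrightarrow> 0"
  shows "summable f"
proof -
  obtain N where N: "\<And>n. n \<ge> N \<Longrightarrow> \<bar>r n\<bar> < 1/2"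
    using order_tendstoD(2)[OF tendsto_rabs_zero[OF assms(2)], of "1/2"]
    by (auto simp: eventually_at_top_linorder)
  show ?thesis
  proof (rule summable_ratio_test[of "1/2" N])
    fix n assume "N \<le> n"
    then have "r n \<le> 1/2"
      using N[of n] by linarith
    then have "r n * norm (f n) \<le> 1/2 * norm (f n)"
      by (intro mult_right_mono) auto
    then show "norm (f (Suc n)) \<le> 1/2 * norm (f n)"
      using assms(1) order_trans by blast
  qed simp
qed

definition wp_term :: "real \<Rightarrow> real \<Rightarrow> real \<Rightarrow> nat \<Rightarrow> real" where
  "wp_term q c b n = (if n = 0 then 1 else
     qpoch (b*q) q (n-1) * (1 - b*q^(2*n)) * qpoch (b*q/c) q n * q^(n*n-n) * c^n
       / (qpoch q q n * qpoch c q n))"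

definition wp_antidiff :: "real \<Rightarrow> real \<Rightarrow> real \<Rightarrow> nat \<Rightarrow> real" where
  "wp_antidiff q c b n = (if n = 0 then 0 else
     b * q^(n*n-n+1) * c^(n-1) * qpoch (b*q) q (n-1) * qpoch (b*q^2/c) q (n-1)
       / (qpoch q q (n-1) * qpoch c q (n-1)))"

lemma wp_term_Suc:
  "wp_term q c b (Suc n) = qpoch (b*q) q n * (1 - b*q^(2 * Suc n)) * qpoch (b*q/c) q (Suc n)
     * q^(Suc n * Suc n - Suc n) * c^Suc n / (qpoch q q (Suc n) * qpoch c q (Suc n))"
  by (simp add: wp_term_def)

lemma wp_antidiff_Suc:
  "wp_antidiff q c b (Suc n) = b * q^(Suc n * Suc n - Suc n + 1) * c^n * qpoch (b*q) q n
     * qpoch (b*q^2/c) q n / (qpoch q q n * qpoch c q n)"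
  by (simp add: wp_antidiff_def)

locale wp_series =
  fixes q c :: real
  assumes q_pos: "0 < q" and q_less_1: "q < 1" and c_pos: "0 < c" and c_less_1: "c < 1"
begin

lemma qpoch_q_pos: "0 < qpoch q q n"
  using qpoch_pos[of q q n] q_pos q_less_1 by simp

lemma qpoch_c_pos: "0 < qpoch c q n"
  using qpoch_pos[of c q n] q_pos q_less_1 c_pos c_less_1 by simp

lemma wp_term_telescope:
  "wp_term q c b n - (1 - b*q) * wp_term q c (b*q) n = wp_antidiff q c b (Suc n) - wp_antidiff q c b n"
proof (cases n)
  case 0
  then show ?thesis by (simp add: wp_term_def wp_antidiff_def)
next
  case (Suc m)
  define A where "A = qpoch (b*q) q m"
  define E where "E = qpoch (b*q^2/c) q m"
  define D1 where "D1 = qpoch q q m"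
  define D2 where "D2 = qpoch c q m"
  define u where "u = q^m"
  define X where "X = 1 - q*u"
  define Y where "Y = 1 - c*u"
  define K where "K = A * E * q^(m*m+m) * c^m / (D1 * X * (D2 * Y))"
  \<comment> \<open>each of the four terms is \<open>K\<close> times a polynomial in \<open>b, q, c, u\<close>\<close>
  have "q*u < 1" "c*u < 1"
    using q_pos q_less_1 c_pos c_less_1 by (auto simp: u_def intro: mult_power_less_one)
  then have nz: "D1 \<noteq> 0" "D2 \<noteq> 0" "X \<noteq> 0" "Y \<noteq> 0" "c \<noteq> 0"
    using qpoch_q_pos[of m] qpoch_c_pos[of m] c_pos by (auto simp: D1_def D2_def X_def Y_def)
  have "2 * Suc m = 2 + m*2" "Suc m * Suc m - Suc m = m*m+m" "Suc m * Suc m - Suc m + 1 = (m*m+m) + 1"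
    "Suc (Suc m) * Suc (Suc m) - Suc (Suc m) + 1 = (m*m+m) + m*2 + 3"
    by simp_all
  then have pow: "q^(2 * Suc m) = q^2*u^2" "q^(Suc m * Suc m - Suc m) = q^(m*m+m)"
    "q^(Suc m * Suc m - Suc m + 1) = q^(m*m+m)*q"
    "q^(Suc (Suc m) * Suc (Suc m) - Suc (Suc m) + 1) = q^(m*m+m)*u^2*q^3"
    unfolding u_def by (simp_all only: power_add power_mult power_one_right)
  have qpoch_Suc_m: "qpoch (b*q/c) q (Suc m) = (1 - b*q/c) * E"
    "qpoch (b*q*q/c) q (Suc m) = E * (1 - b*q^2/c*u)" "qpoch (b*q^2/c) q (Suc m) = E * (1 - b*q^2/c*u)"
    "(1 - b*q) * qpoch (b*q*q) q m = A * (1 - b*q*u)"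
    "qpoch (b*q) q (Suc m) = A * (1 - b*q*u)"
    "qpoch q q (Suc m) = D1 * X" "qpoch c q (Suc m) = D2 * Y"
    using qpoch_Suc_shift[of "b*q" q m, symmetric] qpoch_Suc_shift[of "b*q/c" q m]
    by (simp_all add: qpoch_Suc A_def E_def D1_def D2_def X_def Y_def u_def power2_eq_square
        mult_ac)
  have "wp_term q c b n = K * ((c - b*q) * (1 - b*q^2*u^2))"
    unfolding Suc wp_term_Suc qpoch_Suc_m pow using nz
    by (simp add: K_def A_def field_simps)
  moreover have "(1 - b*q) * wp_term q c (b*q) n = K * ((1-b*q*u) * (1-b*q^3*u^2) * (c-b*q^2*u))"
    unfolding Suc wp_term_Suc times_divide_eq_right mult.assoc[symmetric] qpoch_Suc_m pow using nz
    by (simp add: K_def field_simps power2_eq_square power3_eq_cube)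
  moreover have "wp_antidiff q c b (Suc n) = K * (b*u^2*q^3 * (1-b*q*u) * (c-b*q^2*u))"
    unfolding Suc wp_antidiff_Suc qpoch_Suc_m pow using nz
    by (simp add: K_def field_simps power2_eq_square power3_eq_cube)
  moreover have "wp_antidiff q c b n = K * (b*q*X*Y)"
    unfolding Suc wp_antidiff_Suc pow using nz
    by (simp add: K_def A_def E_def D1_def D2_def field_simps)
  moreover have "(c - b*q) * (1 - b*q^2*u^2) - (1-b*q*u) * (1-b*q^3*u^2) * (c-b*q^2*u)
      = b*u^2*q^3 * (1-b*q*u) * (c-b*q^2*u) - b*q*X*Y"
    unfolding X_def Y_def by (simp add: algebra_simps power2_eq_square power3_eq_cube)
  ultimately show ?thesis
    by (metis right_diff_distrib)
qed

lemma wp_term_zero: "wp_term q c 0 n = q^(n*n-n) * c^n / (qpoch q q n * qpoch c q n)"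
  by (simp add: wp_term_def)

lemma wp_term_zero_nonneg: "0 \<le> wp_term q c 0 n"
  unfolding wp_term_zero using qpoch_q_pos[of n] qpoch_c_pos[of n] q_pos c_pos by simp

lemma summable_wp_term_zero: "summable (wp_term q c 0)"
proof (rule summable_ratio_tendsto_zero)
  define r where "r n = q^(2*n) * c / ((1 - q*q^n) * (1 - c*q^n))" for n
  show "norm (wp_term q c 0 (Suc n)) \<le> r n * norm (wp_term q c 0 n)" for n
  proof -
    have "Suc n * Suc n - Suc n = (n*n - n) + 2*n"
      by (cases n) (auto simp: algebra_simps)
    then have "q^(Suc n * Suc n - Suc n) = q^(n*n - n) * q^(2*n)"
      by (simp only: power_add)
    then have "wp_term q c 0 (Suc n) = r n * wp_term q c 0 n"
      using qpoch_q_pos[of n] qpoch_c_pos[of n] mult_power_less_one[of q q n]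
        mult_power_less_one[of c q n] q_pos q_less_1 c_pos c_less_1
      unfolding wp_term_zero r_def qpoch_Suc by (simp add: field_simps)
    then show ?thesis
      using wp_term_zero_nonneg[of n] wp_term_zero_nonneg[of "Suc n"] by (simp add: abs_mult)
  qed
  have "q^2 < 1"
    using q_pos q_less_1 by (simp add: power_less_one_iff)
  then have "(\<lambda>n. q^n) \<longlonglongrightarrow> 0" "(\<lambda>n. (q^2)^n) \<longlonglongrightarrow> 0"
    using q_pos q_less_1 by (auto intro!: LIMSEQ_power_zero)
  then have "r \<longlonglongrightarrow> 0 * c / ((1 - q*0) * (1 - c*0))"
    unfolding r_def power_mult using q_pos q_less_1 c_less_1 \<open>q^2 < 1\<close> by (intro tendsto_intros) auto
  then show "r \<longlonglongrightarrow> 0" by simp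
qed

lemma wp_term_eq_factor_mult:
  assumes "0 \<le> b" "b \<le> c/q"
  obtains F where "wp_term q c b n = F * wp_term q c 0 n" "0 \<le> F" "F \<le> 1"
    "1 - b * (q/(1-q) + 1 + q/(c*(1-q))) \<le> F"
proof (cases n)
  case 0
  then show ?thesis
    using that[of 1] assms q_pos q_less_1 c_pos by (simp add: wp_term_def)
next
  case (Suc m)
  define A1 where "A1 = qpoch (b*q) q m"
  define A2 where "A2 = 1 - b*q^(2*n)"
  define A3 where "A3 = qpoch (b*q/c) q n"
  have bq: "0 \<le> b*q" "b*q \<le> c" "0 \<le> b*q/c" "b*q/c \<le> 1"
    using assms q_pos c_pos by (auto simp: field_simps)
  then have A1: "0 \<le> A1" "A1 \<le> 1" "1 - b*q/(1-q) \<le> A1"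
    and A3: "0 \<le> A3" "A3 \<le> 1" "1 - (b*q/c)/(1-q) \<le> A3"
    unfolding A1_def A3_def using qpoch_bounds[of "b*q" q m] qpoch_bounds[of "b*q/c" q n] q_pos q_less_1
      c_less_1 by auto
  have "q^(2*n) \<le> q^1"
    using q_pos q_less_1 Suc by (intro power_decreasing) auto
  then have "b*q^(2*n) \<le> b*q" "b*q \<le> b"
    using assms q_less_1 mult_left_mono[of "q^(2*n)" q b] mult_left_le[of q b] by auto
  then have A2: "0 \<le> A2" "A2 \<le> 1" "1 - b \<le> A2"
    unfolding A2_def using assms q_pos bq c_less_1 by auto
  have "1 - b * (q/(1-q) + 1 + q/(c*(1-q))) = (1 - b*q/(1-q)) + (1 - b) + (1 - (b*q/c)/(1-q)) - 1 - 1"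
    by (simp add: algebra_simps)
  also have "\<dots> \<le> A1 * A2 + A3 - 1"
    using add_minus_one_le_mult[of A1 A2] A1 A2 A3 by linarith
  also have "\<dots> \<le> A1 * A2 * A3"
    using A1 A2 A3 by (intro add_minus_one_le_mult mult_le_one) auto
  finally have "1 - b * (q/(1-q) + 1 + q/(c*(1-q))) \<le> A1 * A2 * A3" .
  moreover have "0 \<le> A1 * A2 * A3" "A1 * A2 * A3 \<le> 1"
    using A1 A2 A3 by (auto intro: mult_le_one)
  moreover have "wp_term q c b n = (A1 * A2 * A3) * wp_term q c 0 n"
    unfolding Suc wp_term_Suc wp_term_zero A1_def A2_def A3_def Suc by simp
  ultimately show ?thesis
    using that by blast
qed

lemma wp_term_bounds:
  assumes "0 \<le> b" "b \<le> c/q"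
  shows "0 \<le> wp_term q c b n" "wp_term q c b n \<le> wp_term q c 0 n"
    "(1 - b * (q/(1-q) + 1 + q/(c*(1-q)))) * wp_term q c 0 n \<le> wp_term q c b n"
  using wp_term_eq_factor_mult[OF assms, of n] wp_term_zero_nonneg[of n]
  by (metis mult_left_le_one_le mult_nonneg_nonneg mult_right_mono)+

lemma summable_wp_term:
  assumes "0 \<le> b" "b \<le> c/q"
  shows "summable (wp_term q c b)"
  by (rule summable_comparison_test'[OF summable_wp_term_zero, of 0]) (use wp_term_bounds(1,2)[OF assms] in simp)

lemma wp_antidiff_bounds:
  assumes "0 \<le> b" "b \<le> c/q"
  shows "0 \<le> wp_antidiff q c b (Suc n)" "wp_antidiff q c b (Suc n) \<le> b * wp_term q c 0 n"
proof -
  define P where "P = q^(2*n+1) * qpoch (b*q) q n * qpoch (b*q^2/c) q n"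
  have "Suc n * Suc n - Suc n + 1 = (n*n - n) + (2*n+1)"
    by (cases n) auto
  then have pow: "q^(Suc n * Suc n - Suc n + 1) = q^(n*n - n) * q^(2*n+1)"
    by (simp only: power_add)
  have eq: "wp_antidiff q c b (Suc n) = b * P * wp_term q c 0 n"
    unfolding wp_antidiff_Suc pow wp_term_zero P_def by simp
  have "b*q \<le> c" "b*q*q \<le> b*q"
    using assms q_pos q_less_1 mult_left_le[of q "b*q"] by (auto simp: field_simps)
  then have "0 \<le> b*q" "b*q \<le> 1" "0 \<le> b*q^2/c" "b*q^2/c \<le> 1"
    using assms q_pos c_pos c_less_1 by (auto simp: field_simps power2_eq_square)
  then have "0 \<le> qpoch (b*q) q n" "qpoch (b*q) q n \<le> 1"
    "0 \<le> qpoch (b*q^2/c) q n" "qpoch (b*q^2/c) q n \<le> 1" "0 \<le> q^(2*n+1)" "q^(2*n+1) \<le> 1"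
    using qpoch_bounds[of "b*q" q n] qpoch_bounds[of "b*q^2/c" q n] q_pos q_less_1
      power_le_one[of q "2*n+1"] by simp_all
  then have "0 \<le> P" "P \<le> 1"
    unfolding P_def by (simp_all add: mult_le_one)
  moreover have "0 \<le> b * wp_term q c 0 n"
    using assms(1) wp_term_zero_nonneg[of n] by simp
  ultimately show "0 \<le> wp_antidiff q c b (Suc n)" "wp_antidiff q c b (Suc n) \<le> b * wp_term q c 0 n"
    unfolding eq using mult_left_le_one_le[of "b * wp_term q c 0 n" P] by (simp_all add: ac_simps)
qed

definition wp_sum :: "real \<Rightarrow> real" where
  "wp_sum b = (\<Sum>n. wp_term q c b n)"

lemma mult_power_in_range:
  assumes "0 \<le> x" "x \<le> c/q"
  shows "0 \<le> x * q^m" "x * q^m \<le> c/q"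
  using assms q_pos q_less_1 mult_left_le[of "q^m" x] by (auto simp: power_le_one)

lemma wp_sum_recurrence:
  assumes "0 \<le> b" "b \<le> c/q"
  shows "wp_sum b = (1 - b*q) * wp_sum (b*q)"
proof -
  have "0 \<le> b*q" "b*q \<le> c/q"
    using mult_power_in_range[OF assms, of 1] by simp_all
  then have "wp_term q c (b*q) sums wp_sum (b*q)"
    unfolding wp_sum_def by (rule summable_sums[OF summable_wp_term])
  moreover have "wp_term q c b sums wp_sum b"
    unfolding wp_sum_def by (rule summable_sums[OF summable_wp_term[OF assms]])
  ultimately have "(\<lambda>n. wp_term q c b n - (1 - b*q) * wp_term q c (b*q) n)
      sums (wp_sum b - (1 - b*q) * wp_sum (b*q))"
    by (intro sums_diff sums_mult)
  moreover have "(\<lambda>n. wp_term q c b n - (1 - b*q) * wp_term q c (b*q) n) sums 0"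
  proof -
    have "(\<lambda>n. wp_antidiff q c b (Suc n)) \<longlonglongrightarrow> 0"
    proof (rule tendsto_sandwich[of "\<lambda>_. 0" _ _ "\<lambda>n. b * wp_term q c 0 n"])
      show "(\<lambda>n. b * wp_term q c 0 n) \<longlonglongrightarrow> 0"
        using tendsto_mult_right_zero[OF summable_LIMSEQ_zero[OF summable_wp_term_zero]] .
    qed (simp_all add: wp_antidiff_bounds[OF assms])
    then have "(\<lambda>n. wp_antidiff q c b (Suc n) - wp_antidiff q c b n) sums (0 - wp_antidiff q c b 0)"
      by (rule telescope_sums[OF LIMSEQ_imp_Suc])
    moreover have "wp_antidiff q c b 0 = 0"
      by (simp add: wp_antidiff_def)
    ultimately show ?thesis
      by (simp add: wp_term_telescope)
  qed
  ultimately have "wp_sum b - (1 - b*q) * wp_sum (b*q) = 0"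
    by (rule sums_unique2)
  then show ?thesis
    by simp
qed

lemma wp_sum_top: "wp_sum (c/q) = 1"
proof -
  have "wp_term q c (c/q) = (\<lambda>n. if n = 0 then 1 else 0)"
  proof
    fix n
    show "wp_term q c (c/q) n = (if n = 0 then 1 else 0)"
      using q_pos c_pos by (cases n) (simp_all add: wp_term_def qpoch_Suc_shift)
  qed
  then show ?thesis
    unfolding wp_sum_def using sums_single[of 0 "\<lambda>_. 1::real"] sums_unique by fastforce
qed

lemma wp_sum_ge_1:
  assumes "0 \<le> b" "b \<le> c/q"
  shows "1 \<le> wp_sum b"
proof -
  have "(\<Sum>n\<in>{0}. wp_term q c b n) \<le> wp_sum b"
    unfolding wp_sum_def
    by (rule sum_le_suminf) (use summable_wp_term[OF assms] wp_term_bounds(1)[OF assms] in auto)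
  then show ?thesis
    by (simp add: wp_term_def)
qed

lemma wp_sum_iterate:
  assumes "0 \<le> b" "b \<le> c/q"
  shows "wp_sum b = qpoch (b*q) q m * wp_sum (b*q^m)"
proof (induction m)
  case (Suc m)
  have "0 \<le> b*q^m" "b*q^m \<le> c/q"
    using mult_power_in_range[OF assms] by simp_all
  then have "wp_sum (b*q^m) = (1 - b*q*q^m) * wp_sum (b*q^Suc m)"
    using wp_sum_recurrence by (simp add: ac_simps)
  with Suc.IH show ?case
    by (simp add: qpoch_Suc)
qed simp

lemma tendsto_wp_sum_at_zero:
  assumes "\<And>m. 0 \<le> x m" "\<And>m. x m \<le> c/q" "x \<longlonglongrightarrow> 0"
  shows "(\<lambda>m. wp_sum (x m)) \<longlonglongrightarrow> wp_sum 0"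
proof (rule tendsto_sandwich)
  define K where "K = q/(1-q) + 1 + q/(c*(1-q))"
  have "(1 - x m * K) * wp_sum 0 = (\<Sum>n. (1 - x m * K) * wp_term q c 0 n)" for m
    unfolding wp_sum_def by (rule suminf_mult[OF summable_wp_term_zero, symmetric])
  also have "\<dots> m \<le> wp_sum (x m)" for m
    unfolding wp_sum_def using wp_term_bounds(3)[OF assms(1,2)] summable_wp_term[OF assms(1,2)]
    by (intro suminf_le summable_mult summable_wp_term_zero) (simp_all add: K_def mult.commute)
  finally show "eventually (\<lambda>m. (1 - x m * K) * wp_sum 0 \<le> wp_sum (x m)) sequentially"
    by simp
  show "eventually (\<lambda>m. wp_sum (x m) \<le> wp_sum 0) sequentially"
    unfolding wp_sum_def using wp_term_bounds(2)[OF assms(1,2)] summable_wp_term[OF assms(1,2)]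
    by (intro always_eventually allI suminf_le summable_wp_term_zero) simp_all
  have "(\<lambda>m. (1 - x m * K) * wp_sum 0) \<longlonglongrightarrow> (1 - 0 * K) * wp_sum 0"
    by (intro tendsto_intros assms(3))
  then show "(\<lambda>m. (1 - x m * K) * wp_sum 0) \<longlonglongrightarrow> wp_sum 0"
    by simp
qed simp

text \<open>Iterating the recurrence gives \<open>qpoch (b*q) q m = wp_sum b / wp_sum (b*q^m)\<close> and
  \<open>qpoch c q m = 1 / wp_sum (c/q*q^m)\<close>; both denominators tend to \<open>wp_sum 0\<close>.\<close>

lemma qpoch_ratio_tendsto_wp_sum:
  assumes "0 \<le> b" "b \<le> c/q"
  shows "(\<lambda>m. qpoch (b*q) q m / qpoch c q m) \<longlonglongrightarrow> wp_sum b"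
proof -
  have top: "0 \<le> c/q" "c/q \<le> c/q"
    using q_pos c_pos by auto
  have lim0: "(\<lambda>m. x * q^m) \<longlonglongrightarrow> 0" for x
    using q_pos q_less_1 by (intro tendsto_mult_right_zero LIMSEQ_power_zero) auto
  have "(\<lambda>m. wp_sum (b * q^m)) \<longlonglongrightarrow> wp_sum 0" "(\<lambda>m. wp_sum (c/q * q^m)) \<longlonglongrightarrow> wp_sum 0"
    by (rule tendsto_wp_sum_at_zero[OF mult_power_in_range[OF assms] lim0]
        tendsto_wp_sum_at_zero[OF mult_power_in_range[OF top] lim0])+
  then have lim: "(\<lambda>m. wp_sum b * wp_sum (c/q * q^m) / wp_sum (b * q^m))
      \<longlonglongrightarrow> wp_sum b * wp_sum 0 / wp_sum 0"
    using wp_sum_ge_1[of 0] q_pos c_pos by (intro tendsto_intros) auto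
  have "qpoch (b*q) q m / qpoch c q m = wp_sum b * wp_sum (c/q * q^m) / wp_sum (b * q^m)" for m
    using wp_sum_iterate[OF assms, of m] wp_sum_iterate[OF top, of m] wp_sum_top q_pos
      wp_sum_ge_1[of "b*q^m"] mult_power_in_range[OF assms] qpoch_c_pos[of m]
    by (simp add: field_simps)
  then show ?thesis
    using lim wp_sum_ge_1[of 0] q_pos c_pos by simp
qed

end

primrec tail_prod :: "real \<Rightarrow> nat list \<Rightarrow> real" where
  "tail_prod Q [] = 1"
| "tail_prod Q (x # xs) = Q ^ (x + sum_list xs) / (1 - Q ^ (x + sum_list xs)) * tail_prod Q xs"

text \<open>\<open>zblock\<close> with the index \<open>j\<close> shifted by \<open>d\<close>, so that splitting off the first factor
  leaves an instance of the same family.\<close>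

definition zblock_shift :: "real \<Rightarrow> real \<Rightarrow> real \<Rightarrow> real \<Rightarrow> real \<Rightarrow> nat list \<Rightarrow> real" where
  "zblock_shift Q z d c e xs =
     (\<Prod>j\<in>{1..length xs}.
        let x = real (xs ! (j - 1));
            prev = (if j = 1 then c else real (xs ! (j - 2)));
            t = sum_list (drop (j - 1) xs)
        in Q powr (x * (x - 1) / 2 + (real j + d) * x + prev * real t) * z powr (e * x)
           / (1 - Q ^ t))"

lemma zblock_eq_zblock_shift: "zblock Q z c e xs = zblock_shift Q z 0 c e xs"
  unfolding zblock_def zblock_shift_def by simp

lemma zblock_shift_Cons:
  "zblock_shift Q z d c e (x # xs) =
     Q powr (real x * (real x - 1) / 2 + (1 + d) * real x + c * real (x + sum_list xs))
     * z powr (e * real x) / (1 - Q ^ (x + sum_list xs)) * zblock_shift Q z (d + 1) (real x) e xs"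
proof -
  let ?f = "\<lambda>ys d c j. let x = real (ys ! (j - 1));
            prev = (if j = 1 then c else real (ys ! (j - 2)));
            t = sum_list (drop (j - 1) ys)
        in Q powr (x * (x - 1) / 2 + (real j + d) * x + prev * real t) * z powr (e * x)
           / (1 - Q ^ t)"
  have "zblock_shift Q z d c e (x # xs) = prod (?f (x # xs) d c) {1..Suc (length xs)}"
    unfolding zblock_shift_def by simp
  also have "\<dots> = ?f (x # xs) d c 1 * prod (?f (x # xs) d c) {Suc 1..Suc (length xs)}"
    by (rule prod.atLeast_Suc_atMost) simp
  also have "prod (?f (x # xs) d c) {Suc 1..Suc (length xs)} = prod (?f xs (d + 1) (real x)) {1..length xs}"
  proof (subst prod.shift_bounds_cl_Suc_ivl, intro prod.cong refl)
    fix j assume "j \<in> {1..length xs}"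
    then obtain k where k: "j = Suc k" by (cases j) auto
    have "(x # xs) ! (Suc j - 1) = xs ! (j - 1)" "drop (Suc j - 1) (x # xs) = drop (j - 1) xs"
      "real (Suc j) + d = real j + (d + 1)"
      "(if Suc j = 1 then c else real ((x # xs) ! (Suc j - 2)))
        = (if j = 1 then real x else real (xs ! (j - 2)))"
      using k by (auto simp: nth_Cons split: nat.split)
    then show "?f (x # xs) d c (Suc j) = ?f xs (d + 1) (real x) j"
      by (simp only: Let_def)
  qed
  also have "prod (?f xs (d + 1) (real x)) {1..length xs} = zblock_shift Q z (d + 1) (real x) e xs"
    unfolding zblock_shift_def ..
  also have "?f (x # xs) d c 1 = Q powr (real x * (real x - 1) / 2 + (1 + d) * real x
      + c * real (x + sum_list xs)) * z powr (e * real x) / (1 - Q ^ (x + sum_list xs))"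
    by (simp add: Let_def add_ac)
  finally show ?thesis .
qed

lemma zblock_shift_closed_form:
  assumes "0 < Q" "0 < z"
  shows "zblock_shift Q z d c e xs = Q powr (real (sum_list xs) * (real (sum_list xs) - 1) / 2
      + c * real (sum_list xs) + d * real (sum_list xs)) * z powr (e * real (sum_list xs)) * tail_prod Q xs"
proof (induction xs arbitrary: d c)
  case (Cons x xs)
  define M where "M = real (sum_list xs)"
  have "real x * (real x - 1) / 2 + (1 + d) * real x + c * real (x + sum_list xs)
      + (M * (M - 1) / 2 + real x * M + (d + 1) * M)
      = (real x + M) * (real x + M - 1) / 2 + c * (real x + M) + d * (real x + M) + real (x + sum_list xs)"
    by (simp add: M_def field_simps)
  then have "Q powr (real x * (real x - 1) / 2 + (1 + d) * real x + c * real (x + sum_list xs))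
      * Q powr (M * (M - 1) / 2 + real x * M + (d + 1) * M)
      = Q powr ((real x + M) * (real x + M - 1) / 2 + c * (real x + M) + d * (real x + M))
        * Q powr real (x + sum_list xs)"
    by (simp only: flip: powr_add)
  then have "Q powr (real x * (real x - 1) / 2 + (1 + d) * real x + c * real (x + sum_list xs))
      * Q powr (M * (M - 1) / 2 + real x * M + (d + 1) * M)
      = Q powr ((real x + M) * (real x + M - 1) / 2 + c * (real x + M) + d * (real x + M))
        * Q ^ (x + sum_list xs)"
    using assms by (simp only: powr_realpow)
  moreover have "z powr (e * real x) * z powr (e * M) = z powr (e * (real x + M))"
    by (simp add: distrib_left powr_add)
  ultimately show ?case
    unfolding zblock_shift_Cons Cons.IH by (simp add: M_def field_simps)
qed (use assms in \<open>simp add: zblock_shift_def\<close>)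

lemma zblock_closed_form:
  assumes "0 < Q" "0 < z"
  shows "zblock Q z c e xs = Q powr (real (sum_list xs) * (real (sum_list xs) - 1) / 2
      + c * real (sum_list xs)) * z powr (e * real (sum_list xs)) * tail_prod Q xs"
  unfolding zblock_eq_zblock_shift zblock_shift_closed_form[OF assms] by simp

definition compositions :: "nat \<Rightarrow> nat list set" where
  "compositions n = {xs. (\<forall>x\<in>set xs. 1 \<le> x) \<and> sum_list xs = n}"

lemma finite_compositions: "finite (compositions n)"
proof (rule finite_subset)
  have "length xs \<le> sum_list xs" if "\<forall>x\<in>set xs. 1 \<le> x" for xs :: "nat list"
    using that by (induction xs) auto
  then show "compositions n \<subseteq> {xs. set xs \<subseteq> {0..n} \<and> length xs \<le> n}"
    unfolding compositions_def using member_le_sum_list by fastforce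
  show "finite {xs. set xs \<subseteq> {0..n} \<and> length xs \<le> n}"
    by (rule finite_lists_length_le) simp
qed

lemma compositions_0: "compositions 0 = {[]}"
proof -
  have "xs = []" if "\<forall>x\<in>set xs. 1 \<le> x" "sum_list xs = 0" for xs :: "nat list"
    using that by (cases xs) auto
  then show ?thesis
    unfolding compositions_def by auto
qed

lemma compositions_Suc:
  "compositions (Suc n) = (\<lambda>(x, xs). x # xs) ` (SIGMA x:{1..Suc n}. compositions (Suc n - x))"
proof (intro equalityI subsetI)
  fix xs assume "xs \<in> compositions (Suc n)"
  then obtain x ys where "xs = x # ys" "x \<in> {1..Suc n}" "ys \<in> compositions (Suc n - x)"
    unfolding compositions_def by (cases xs) auto
  then show "xs \<in> (\<lambda>(x, xs). x # xs) ` (SIGMA x:{1..Suc n}. compositions (Suc n - x))"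
    by force
qed (auto simp: compositions_def)

definition composition_sum :: "real \<Rightarrow> real \<Rightarrow> nat \<Rightarrow> real" where
  "composition_sum Q y n = (\<Sum>xs\<in>compositions n. y ^ length xs * tail_prod Q xs)"

lemma composition_sum_Suc:
  "composition_sum Q y (Suc n) = y * Q ^ Suc n / (1 - Q ^ Suc n) * (\<Sum>m\<le>n. composition_sum Q y m)"
proof -
  let ?w = "\<lambda>xs. y ^ length xs * tail_prod Q xs"
  have "inj_on (\<lambda>(x, xs). x # xs) (SIGMA x:{1..Suc n}. compositions (Suc n - x))"
    by (auto simp: inj_on_def)
  then have "composition_sum Q y (Suc n)
      = (\<Sum>(x, xs)\<in>(SIGMA x:{1..Suc n}. compositions (Suc n - x)). ?w (x # xs))"
    unfolding composition_sum_def compositions_Suc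
    by (subst sum.reindex) (auto simp: o_def intro!: sum.cong)
  also have "\<dots> = (\<Sum>x=1..Suc n. \<Sum>xs\<in>compositions (Suc n - x). ?w (x # xs))"
    by (subst sum.Sigma) (auto simp: finite_compositions)
  also have "\<dots> = (\<Sum>x=1..Suc n. \<Sum>xs\<in>compositions (Suc n - x).
      y * Q ^ Suc n / (1 - Q ^ Suc n) * ?w xs)"
    by (intro sum.cong refl) (auto simp: compositions_def)
  also have "\<dots> = y * Q ^ Suc n / (1 - Q ^ Suc n) * (\<Sum>x=1..Suc n. composition_sum Q y (Suc n - x))"
    unfolding composition_sum_def sum_distrib_left ..
  also have "(\<Sum>x=1..Suc n. composition_sum Q y (Suc n - x)) = (\<Sum>m\<le>n. composition_sum Q y m)"
    by (rule sum.reindex_bij_witness[of _ "\<lambda>m. Suc n - m" "\<lambda>x. Suc n - x"]) auto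
  finally show ?thesis .
qed

lemma sum_composition_sum:
  assumes "0 < Q" "Q < 1"
  shows "(\<Sum>m\<le>n. composition_sum Q y m) = qpoch ((1 - y) * Q) Q n / qpoch Q Q n"
proof (induction n)
  case 0
  then show ?case
    by (simp add: composition_sum_def compositions_0)
next
  case (Suc n)
  have "Q * Q ^ n < 1" "0 < qpoch Q Q n"
    using assms mult_power_less_one[of Q Q n] by (simp_all add: qpoch_pos)
  then show ?case
    using Suc.IH by (simp add: composition_sum_Suc qpoch_Suc field_simps)
qed

lemma composition_sum_eq_qpoch:
  assumes "0 < Q" "Q < 1"
  shows "composition_sum Q y n = Q ^ n * qpoch (1 - y) Q n / qpoch Q Q n"
proof (cases n)
  case 0
  then show ?thesis
    by (simp add: composition_sum_def compositions_0)
next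
  case (Suc m)
  have "Q * Q ^ m < 1" "0 < qpoch Q Q m"
    using assms mult_power_less_one[of Q Q m] by (simp_all add: qpoch_pos)
  then show ?thesis
    using sum_composition_sum[OF assms, of y m]
    by (simp add: Suc composition_sum_Suc qpoch_Suc[of Q Q m] qpoch_Suc_shift[of "1 - y" Q m] field_simps)
qed

lemma zterm_closed_form:
  assumes "0 < Q" "0 < z"
  shows "zterm Q z y (ls, ms) = (y ^ length ls * tail_prod Q ls) * (y ^ length ms * tail_prod Q ms)
     * Q powr (real (sum_list ls) * (real (sum_list ls) - 1) / 2 - real (sum_list ls)
               + real (sum_list ms) * (real (sum_list ms) - 1) / 2)
     * z powr (real (sum_list ms) - real (sum_list ls))
     * ((1 - 1/y) * Q ^ (sum_list ls + sum_list ms) + 1/y)"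
proof -
  define N where "N = real (sum_list ls)"
  define M where "M = real (sum_list ms)"
  have "Q powr (N * (N - 1) / 2 + - 1 * N) * Q powr (M * (M - 1) / 2 + 0 * M)
      = Q powr (N * (N - 1) / 2 - N + M * (M - 1) / 2)"
    by (simp add: algebra_simps flip: powr_add)
  moreover have "z powr (- 1 * N) * z powr (1 * M) = z powr (M - N)"
    by (simp add: algebra_simps flip: powr_add)
  ultimately show ?thesis
    unfolding zterm_def prod.case zblock_closed_form[OF assms] N_def[symmetric] M_def[symmetric]
    by (simp add: power_add ac_simps)
qed

definition pair_weight :: "real \<Rightarrow> real \<Rightarrow> nat \<Rightarrow> nat \<Rightarrow> real" where
  "pair_weight Q y N M = composition_sum Q y N * composition_sum Q y M
     * Q powr (real N * (real N - 1) / 2 - real N + real M * (real M - 1) / 2)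
     * ((1 - 1/y) * Q ^ (N + M) + 1/y)"

lemma sum_zterm_compositions:
  assumes "0 < Q" "0 < z"
  shows "(\<Sum>p\<in>compositions N \<times> compositions M. zterm Q z y p)
    = z powr (real M - real N) * pair_weight Q y N M"
proof -
  let ?w = "\<lambda>xs. y ^ length xs * tail_prod Q xs"
  let ?C = "Q powr (real N * (real N - 1) / 2 - real N + real M * (real M - 1) / 2)
      * z powr (real M - real N) * ((1 - 1/y) * Q ^ (N + M) + 1/y)"
  have "(\<Sum>p\<in>compositions N \<times> compositions M. zterm Q z y p)
      = (\<Sum>ls\<in>compositions N. \<Sum>ms\<in>compositions M. zterm Q z y (ls, ms))"
    by (simp add: sum.cartesian_product)
  also have "\<dots> = (\<Sum>ls\<in>compositions N. \<Sum>ms\<in>compositions M. ?w ls * ?w ms * ?C)"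
    by (intro sum.cong refl) (auto simp: compositions_def zterm_closed_form[OF assms] mult.assoc)
  also have "\<dots> = (\<Sum>ls\<in>compositions N. \<Sum>ms\<in>compositions M. ?w ls * ?w ms) * ?C"
    by (simp only: sum_distrib_right)
  also have "\<dots> = z powr (real M - real N) * pair_weight Q y N M"
    unfolding pair_weight_def composition_sum_def sum_product by (simp only: ac_simps)
  finally show ?thesis .
qed

lemma pair_weight_swap: "pair_weight Q y (n + j) n = Q powr (- real j) * pair_weight Q y n (n + j)"
proof -
  have "real (n + j) * (real (n + j) - 1) / 2 - real (n + j) + real n * (real n - 1) / 2
      = - real j + (real n * (real n - 1) / 2 - real n + real (n + j) * (real (n + j) - 1) / 2)"
    by (simp add: field_simps)
  then have "Q powr (real (n + j) * (real (n + j) - 1) / 2 - real (n + j) + real n * (real n - 1) / 2)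
      = Q powr (- real j) * Q powr (real n * (real n - 1) / 2 - real n + real (n + j) * (real (n + j) - 1) / 2)"
    by (simp only: powr_add)
  moreover have "n + j + n = n + (n + j)"
    by simp
  ultimately show ?thesis
    unfolding pair_weight_def by (simp only: ac_simps)
qed

lemma pair_weight_eq_qpoch:
  assumes "0 < Q" "Q < 1" "y \<noteq> 0"
  shows "pair_weight Q y N M = Q ^ N * qpoch (1 - y) Q N / qpoch Q Q N * (Q ^ M * qpoch (1 - y) Q M / qpoch Q Q M)
     * Q powr (real N * (real N - 1) / 2 - real N + real M * (real M - 1) / 2)
     * ((1 - (1 - y) * Q ^ (N + M)) / y)"
proof -
  have "(1 - 1/y) * Q ^ (N + M) + 1/y = (1 - (1 - y) * Q ^ (N + M)) / y"
    using assms(3) by (simp add: field_simps)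
  then show ?thesis
    unfolding pair_weight_def composition_sum_eq_qpoch[OF assms(1,2)] by simp
qed

lemma pair_weight_diagonal_0:
  assumes Q: "0 < Q" "Q < 1" and y: "0 < y"
  shows "pair_weight Q y 0 j = Q powr (real j * (real j + 1) / 2) * (qpoch ((1 - y) * Q) Q j / qpoch Q Q j)"
proof -
  have "qpoch (1 - y) Q j * (1 - (1 - y) * Q ^ j) = y * qpoch ((1 - y) * Q) Q j"
    using qpoch_Suc[of "1 - y" Q j] qpoch_Suc_shift[of "1 - y" Q j] by simp
  moreover have "Q ^ j * Q powr (real j * (real j - 1) / 2) = Q powr (real j * (real j + 1) / 2)"
    using Q by (simp add: powr_realpow[symmetric] field_simps flip: powr_add)
  moreover have "pair_weight Q y 0 j = (Q ^ j * Q powr (real j * (real j - 1) / 2))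
      * (qpoch (1 - y) Q j * (1 - (1 - y) * Q ^ j)) / (y * qpoch Q Q j)"
    using Q y by (simp add: pair_weight_eq_qpoch ac_simps)
  ultimately show ?thesis
    using y by simp
qed

lemma diagonal_exponent_identity:
  fixes Q :: real
  assumes "0 < Q"
  shows "Q ^ s * Q ^ (s + j) * Q powr (real s * (real s - 1) / 2 - real s
          + real (s + j) * (real (s + j) - 1) / 2)
      = Q powr (real j * (real j + 1) / 2) * Q ^ (s * s - s) * (Q ^ Suc j) ^ s"
proof -
  have powr_nat: "Q ^ k = Q powr real k" for k
    using assms by (simp add: powr_realpow)
  have "Q ^ s * Q ^ (s + j) = Q powr real (s + (s + j))"
    unfolding power_add[symmetric] by (rule powr_nat)
  moreover have "Q ^ (s * s - s) * (Q ^ Suc j) ^ s = Q powr real (s * s - s + Suc j * s)"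
    unfolding power_mult[symmetric] power_add[symmetric] by (rule powr_nat)
  moreover have "real (s + (s + j)) + (real s * (real s - 1) / 2 - real s
        + real (s + j) * (real (s + j) - 1) / 2)
      = real j * (real j + 1) / 2 + real (s * s - s + Suc j * s)"
    by (cases s) (simp_all add: field_simps)
  ultimately show ?thesis
    by (simp only: mult.assoc flip: powr_add)
qed

lemma pair_weight_diagonal_Suc:
  assumes Q: "0 < Q" "Q < 1" and y: "0 < y" "y \<le> 1"
  shows "pair_weight Q y (Suc m) (Suc m + j) = Q powr (real j * (real j + 1) / 2)
     * (qpoch ((1 - y) * Q) Q j / qpoch Q Q j) * wp_term Q (Q ^ Suc j) ((1 - y) * Q ^ j) (Suc m)"
proof -
  define a where "a = 1 - y"
  define s where "s = Suc m"
  define R where "R = qpoch a Q s * qpoch (a * Q) Q j * qpoch (a * Q ^ j * Q) Q m * (1 - a * Q ^ (s + (s + j)))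
    / (qpoch Q Q s * qpoch Q Q j * qpoch (Q ^ Suc j) Q s)"
  have "Q ^ Suc j < 1"
    using Q mult_power_less_one[of Q Q j] by simp
  then have pos: "0 < qpoch Q Q k" "0 < qpoch (a * Q) Q k" "0 < qpoch (Q ^ Suc j) Q k" for k
    using Q y mult_power_less_one[of a Q 1] by (auto intro!: qpoch_pos simp: a_def simp del: power_Suc)
  have "qpoch a Q (s + j) = y * (qpoch (a * Q) Q j * qpoch (a * Q ^ j * Q) Q m)"
    using qpoch_Suc_shift[of a Q "j + m"] qpoch_add[of "a * Q" Q j m] by (simp add: s_def a_def ac_simps)
  moreover have "qpoch Q Q (s + j) = qpoch Q Q j * qpoch (Q ^ Suc j) Q s"
    using qpoch_add[of Q Q j s] by (simp add: ac_simps)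
  ultimately have L: "pair_weight Q y s (s + j)
      = (Q ^ s * Q ^ (s + j) * Q powr (real s * (real s - 1) / 2 - real s
          + real (s + j) * (real (s + j) - 1) / 2)) * R"
    using Q y pos[of j] pos[of s] by (simp add: pair_weight_eq_qpoch R_def field_simps a_def)
  have "s + (s + j) = j + 2 * s"
    by simp
  then have wp: "a * Q ^ j * Q / Q ^ Suc j = a" "a * Q ^ j * Q ^ (2 * s) = a * Q ^ (s + (s + j))"
    using Q by (simp_all only: power_add mult.assoc) simp
  have R: "Q powr (real j * (real j + 1) / 2) * (qpoch (a * Q) Q j / qpoch Q Q j)
      * wp_term Q (Q ^ Suc j) (a * Q ^ j) s
      = (Q powr (real j * (real j + 1) / 2) * Q ^ (s * s - s) * (Q ^ Suc j) ^ s) * R"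
    unfolding s_def wp_term_Suc unfolding s_def[symmetric] wp using pos[of j] pos[of s]
    by (simp add: R_def field_simps)
  have "Q ^ s * Q ^ (s + j) * Q powr (real s * (real s - 1) / 2 - real s
          + real (s + j) * (real (s + j) - 1) / 2)
      = Q powr (real j * (real j + 1) / 2) * Q ^ (s * s - s) * (Q ^ Suc j) ^ s"
    by (rule diagonal_exponent_identity[OF Q(1)])
  then show ?thesis
    using L R by (simp add: s_def a_def)
qed

lemma pair_weight_diagonal:
  assumes "0 < Q" "Q < 1" "0 < y" "y \<le> 1"
  shows "pair_weight Q y n (n + j) = Q powr (real j * (real j + 1) / 2)
     * (qpoch ((1 - y) * Q) Q j / qpoch Q Q j) * wp_term Q (Q ^ Suc j) ((1 - y) * Q ^ j) n"
  using assms pair_weight_diagonal_0 pair_weight_diagonal_Suc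
  by (cases n) (simp_all add: wp_term_def)

lemma wp_series_power:
  assumes "0 < Q" "Q < 1"
  shows "wp_series Q (Q ^ Suc j)"
  using assms mult_power_less_one[of Q Q j] by unfold_locales simp_all

lemma tendsto_qpoch_ratio_shift:
  assumes Q: "0 < Q" "Q < 1" and y: "0 < y" "y \<le> 1"
  shows "(\<lambda>m. qpoch ((1 - y) * Q) Q (m + j) / qpoch Q Q (m + j))
    \<longlonglongrightarrow> qpoch ((1 - y) * Q) Q j / qpoch Q Q j * wp_series.wp_sum Q (Q ^ Suc j) ((1 - y) * Q ^ j)"
proof -
  interpret wp_series Q "Q ^ Suc j"
    using wp_series_power[OF Q] .
  have b: "0 \<le> (1 - y) * Q ^ j" "(1 - y) * Q ^ j \<le> Q ^ Suc j / Q"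
    using Q y mult_left_le_one_le[of "Q ^ j" "1 - y"] by auto
  have "(1 - y) * Q < 1"
    using Q y mult_power_less_one[of "1 - y" Q 1] by simp
  then have eq: "qpoch ((1 - y) * Q) Q (m + j) / qpoch Q Q (m + j)
      = qpoch ((1 - y) * Q) Q j / qpoch Q Q j * (qpoch ((1 - y) * Q ^ j * Q) Q m / qpoch (Q ^ Suc j) Q m)" for m
    using qpoch_add[of "(1 - y) * Q" Q j m] qpoch_add[of Q Q j m] Q y
    by (simp add: add.commute[of m] ac_simps qpoch_pos)
  show ?thesis
    unfolding eq by (rule tendsto_mult_left[OF qpoch_ratio_tendsto_wp_sum[OF b]])
qed

lemma convergent_qpoch_ratio:
  fixes Q y :: real
  assumes "0 < Q" "Q < 1" "0 < y" "y \<le> 1"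
  shows "convergent (\<lambda>n. qpoch ((1 - y) * Q) Q n / qpoch Q Q n)"
  using tendsto_qpoch_ratio_shift[OF assms, where j=0] by (auto simp: convergent_def)

lemma pair_weight_diagonal_sums:
  assumes Q: "0 < Q" "Q < 1" and y: "0 < y" "y \<le> 1"
    and L: "(\<lambda>n. qpoch ((1 - y) * Q) Q n / qpoch Q Q n) \<longlonglongrightarrow> L"
  shows "(\<lambda>n. pair_weight Q y n (n + j)) sums (Q powr (real j * (real j + 1) / 2) * L)"
proof -
  interpret wp_series Q "Q ^ Suc j"
    using wp_series_power[OF Q] .
  have "0 \<le> (1 - y) * Q ^ j" "(1 - y) * Q ^ j \<le> Q ^ Suc j / Q"
    using Q y mult_left_le_one_le[of "Q ^ j" "1 - y"] by auto
  then have "wp_term Q (Q ^ Suc j) ((1 - y) * Q ^ j) sums wp_sum ((1 - y) * Q ^ j)"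
    unfolding wp_sum_def by (intro summable_sums summable_wp_term)
  then have "(\<lambda>n. Q powr (real j * (real j + 1) / 2) * (qpoch ((1 - y) * Q) Q j / qpoch Q Q j)
      * wp_term Q (Q ^ Suc j) ((1 - y) * Q ^ j) n) sums (Q powr (real j * (real j + 1) / 2)
      * (qpoch ((1 - y) * Q) Q j / qpoch Q Q j) * wp_sum ((1 - y) * Q ^ j))"
    by (rule sums_mult)
  moreover have "L = qpoch ((1 - y) * Q) Q j / qpoch Q Q j * wp_sum ((1 - y) * Q ^ j)"
    using LIMSEQ_unique[OF LIMSEQ_ignore_initial_segment[OF L, of j] tendsto_qpoch_ratio_shift[OF Q y]] .
  ultimately show ?thesis
    unfolding pair_weight_diagonal[OF Q y] by (simp only: mult.assoc)
qed

lemma has_sum_SigmaI_nonneg: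
  fixes f :: "'a \<times> 'b \<Rightarrow> real"
  assumes "\<And>x. x \<in> A \<Longrightarrow> ((\<lambda>y. f (x, y)) has_sum g x) (B x)" "(g has_sum S) A"
    and "\<And>x y. x \<in> A \<Longrightarrow> y \<in> B x \<Longrightarrow> 0 \<le> f (x, y)"
  shows "(f has_sum S) (Sigma A B)"
proof (rule has_sum_SigmaI[OF assms(1,2)])
  show "f summable_on Sigma A B"
    using assms(2) by (intro summable_on_SigmaI[OF assms(1) _ assms(3)]) (auto simp: summable_on_def)
qed

definition theta_term :: "real \<Rightarrow> real \<Rightarrow> int \<Rightarrow> real" where
  "theta_term Q z k = Q powr (real_of_int (k * (k + 1)) / 2) * z powr real_of_int k"

lemma summable_on_int_nonneg:
  fixes f :: "int \<Rightarrow> real"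
  assumes "summable (\<lambda>n. f (int n))" "summable (\<lambda>n. f (- int n - 1))" "\<And>k. 0 \<le> f k"
  shows "f summable_on UNIV"
proof -
  have "(f \<circ> int) summable_on UNIV" "(f \<circ> (\<lambda>n. - int n - 1)) summable_on UNIV"
    using assms by (auto intro!: summable_nonneg_imp_summable_on simp: o_def)
  then have "f summable_on range int" "f summable_on range (\<lambda>n. - int n - 1)"
    by (subst summable_on_reindex; auto simp: inj_on_def)+
  moreover have "k \<in> range int \<union> range (\<lambda>n. - int n - 1)" for k :: int
    by (cases "0 \<le> k") (auto simp: image_iff intro: exI[of _ "nat k"] exI[of _ "nat (- k - 1)"])
  then have "range int \<union> range (\<lambda>n. - int n - 1) = UNIV"
    by blast
  ultimately show ?thesis
    using summable_on_union by metis
qed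

lemma theta_term_Suc:
  assumes "0 < Q" "0 < z"
  shows "theta_term Q z (int (Suc n)) = Q ^ Suc n * z * theta_term Q z (int n)"
proof -
  have "real_of_int (int (Suc n) * (int (Suc n) + 1)) / 2 = real_of_int (int n * (int n + 1)) / 2 + real (Suc n)"
    "real_of_int (int (Suc n)) = real_of_int (int n) + 1"
    by (simp_all add: field_simps)
  moreover have "z powr 1 = z"
    using assms by simp
  ultimately show ?thesis
    unfolding theta_term_def by (simp only: powr_add powr_realpow[OF assms(1)] ac_simps)
qed

lemma theta_term_neg_Suc:
  assumes "0 < Q" "0 < z"
  shows "theta_term Q z (- int (Suc n) - 1) = Q ^ Suc n * (1 / z) * theta_term Q z (- int n - 1)"
proof -
  have "real_of_int ((- int (Suc n) - 1) * (- int (Suc n) - 1 + 1)) / 2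
      = real_of_int ((- int n - 1) * (- int n - 1 + 1)) / 2 + real (Suc n)"
    "real_of_int (- int (Suc n) - 1) = real_of_int (- int n - 1) + (- 1)"
    by (simp_all add: field_simps)
  moreover have "z powr (- 1) = 1 / z"
    using assms by (simp add: powr_minus divide_inverse)
  ultimately show ?thesis
    unfolding theta_term_def by (simp only: powr_add powr_realpow[OF assms(1)] ac_simps)
qed

lemma summable_on_theta_term:
  assumes Q: "0 < Q" "Q < 1" and z: "0 < z"
  shows "theta_term Q z summable_on UNIV"
proof (rule summable_on_int_nonneg)
  have lim: "(\<lambda>n. Q ^ Suc n * c) \<longlonglongrightarrow> 0" for c
    using Q by (intro tendsto_mult_left_zero LIMSEQ_Suc LIMSEQ_power_zero) auto
  have nonneg: "0 \<le> theta_term Q z k" for k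
    by (simp add: theta_term_def)
  show "summable (\<lambda>n. theta_term Q z (int n))"
  proof (rule summable_ratio_tendsto_zero[OF _ lim[of z]])
    show "norm (theta_term Q z (int (Suc n))) \<le> Q ^ Suc n * z * norm (theta_term Q z (int n))" for n
      unfolding theta_term_Suc[OF Q(1) z] using nonneg[of "int n"] Q z by simp
  qed
  show "summable (\<lambda>n. theta_term Q z (- int n - 1))"
  proof (rule summable_ratio_tendsto_zero[OF _ lim[of "1 / z"]])
    show "norm (theta_term Q z (- int (Suc n) - 1))
        \<le> Q ^ Suc n * (1 / z) * norm (theta_term Q z (- int n - 1))" for n
      unfolding theta_term_neg_Suc[OF Q(1) z] using nonneg[of "- int n - 1"] Q z by simp
  qed
qed (simp add: theta_term_def)

lemma tail_prod_nonneg: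
  assumes "0 < Q" "Q < 1"
  shows "0 \<le> tail_prod Q xs"
  using assms by (induction xs) (auto intro!: mult_nonneg_nonneg divide_nonneg_nonneg simp: power_le_one)

lemma zterm_nonneg:
  assumes "0 < Q" "Q < 1" "0 < z" "0 < y" "y \<le> 1"
  shows "0 \<le> zterm Q z y p"
proof (cases p)
  case (Pair ls ms)
  have "(1 - 1/y) * Q ^ t + 1/y = Q ^ t + (1 - Q ^ t) / y" for t
    using assms by (simp add: field_simps)
  moreover have "Q ^ t \<le> 1" for t
    using assms by (simp add: power_le_one)
  ultimately have "0 \<le> (1 - 1/y) * Q ^ t + 1/y" for t
    using assms by simp
  then show ?thesis
    unfolding Pair zterm_closed_form[OF assms(1,3)]
    using assms tail_prod_nonneg[OF assms(1,2)] by (intro mult_nonneg_nonneg) auto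
qed

lemma pair_weight_nonneg:
  assumes "0 < Q" "Q < 1" "0 < y" "y \<le> 1"
  shows "0 \<le> pair_weight Q y N M"
proof -
  have "pair_weight Q y N M = (\<Sum>p\<in>compositions N \<times> compositions M. zterm Q 1 y p)"
    using sum_zterm_compositions[where z=1] assms by simp
  then show ?thesis
    using zterm_nonneg[where z=1] assms by (simp add: sum_nonneg)
qed

lemma qpoch_ratio_ge_1:
  fixes Q y :: real
  assumes "0 < Q" "Q < 1" "0 < y" "y \<le> 1"
  shows "1 \<le> qpoch ((1 - y) * Q) Q n / qpoch Q Q n"
proof -
  have "0 \<le> composition_sum Q y m" for m
    using assms qpoch_pos[of "1 - y" Q m] qpoch_pos[of Q Q m]
    by (simp add: composition_sum_eq_qpoch)
  then have "composition_sum Q y 0 \<le> (\<Sum>m\<le>n. composition_sum Q y m)"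
    by (intro member_le_sum) auto
  then show ?thesis
    using sum_composition_sum[OF assms(1,2)] by (simp add: composition_sum_def compositions_0)
qed

definition diagonal_index :: "int \<times> nat \<Rightarrow> nat \<times> nat" where
  "diagonal_index = (\<lambda>(k, n). if 0 \<le> k then (n, n + nat k) else (n + nat (- k), n))"

lemma has_sum_pair_weight_diagonal:
  assumes Q: "0 < Q" "Q < 1" and y: "0 < y" "y \<le> 1" and z: "0 < z"
    and L: "(\<lambda>n. qpoch ((1 - y) * Q) Q n / qpoch Q Q n) \<longlonglongrightarrow> L"
  shows "((\<lambda>n. case diagonal_index (k, n) of (N, M) \<Rightarrow> z powr (real M - real N) * pair_weight Q y N M)
    has_sum (theta_term Q z k * L)) UNIV"
proof (rule sums_nonneg_imp_has_sum)
  show "0 \<le> (case diagonal_index (k, n) of (N, M) \<Rightarrow> z powr (real M - real N) * pair_weight Q y N M)" for n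
    using pair_weight_nonneg[OF Q y] by (simp add: case_prod_unfold)
  define j where "j = nat \<bar>k\<bar>"
  have sums: "(\<lambda>n. c * pair_weight Q y n (n + j)) sums (c * Q powr (real j * (real j + 1) / 2) * L)" for c
    using sums_mult[OF pair_weight_diagonal_sums[OF Q y L, of j], of c] by (simp add: mult.assoc)
  show "(\<lambda>n. case diagonal_index (k, n) of (N, M) \<Rightarrow> z powr (real M - real N) * pair_weight Q y N M)
      sums (theta_term Q z k * L)"
  proof (cases "0 \<le> k")
    case True
    then have "k = int j"
      by (simp add: j_def)
    moreover have "Q powr (real j * (real j + 1) / 2) = Q powr (real_of_int (int j * (int j + 1)) / 2)"
      by simp
    ultimately show ?thesis
      using sums[of "z powr real j"] True by (simp add: diagonal_index_def theta_term_def j_def ac_simps)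
  next
    case False
    then have k: "k = - int j"
      by (simp add: j_def)
    have e: "real_of_int (k * (k + 1)) / 2 = - real j + real j * (real j + 1) / 2"
      unfolding k by (simp add: field_simps)
    have "theta_term Q z k = z powr (- real j) * Q powr (- real j) * Q powr (real j * (real j + 1) / 2)"
      unfolding theta_term_def e powr_add by (simp add: k ac_simps)
    moreover have "(case diagonal_index (k, n) of (N, M) \<Rightarrow> z powr (real M - real N) * pair_weight Q y N M)
        = z powr (- real j) * Q powr (- real j) * pair_weight Q y n (n + j)" for n
      using False by (simp add: diagonal_index_def j_def pair_weight_swap)
    ultimately show ?thesis
      using sums[of "z powr (- real j) * Q powr (- real j)"] by simp
  qed
qed

lemma has_sum_pair_weight:
  assumes Q: "0 < Q" "Q < 1" and y: "0 < y" "y \<le> 1" and z: "0 < z"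
    and L: "(\<lambda>n. qpoch ((1 - y) * Q) Q n / qpoch Q Q n) \<longlonglongrightarrow> L"
    and theta: "(theta_term Q z has_sum \<Theta>) UNIV"
  shows "((\<lambda>(N, M). z powr (real M - real N) * pair_weight Q y N M) has_sum (\<Theta> * L)) UNIV"
proof -
  let ?H = "\<lambda>(N, M). z powr (real M - real N) * pair_weight Q y N M"
  have "((\<lambda>p. ?H (diagonal_index p)) has_sum (\<Theta> * L)) (UNIV \<times> UNIV)"
  proof (rule has_sum_SigmaI_nonneg)
    show "((\<lambda>n. ?H (diagonal_index (k, n))) has_sum (theta_term Q z k * L)) UNIV" for k
      by (rule has_sum_pair_weight_diagonal[OF Q y z L])
    show "((\<lambda>k. theta_term Q z k * L) has_sum (\<Theta> * L)) UNIV"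
      by (rule has_sum_cmult_left[OF theta])
    show "0 \<le> ?H (diagonal_index (k, n))" for k n
      using pair_weight_nonneg[OF Q y] by (simp add: case_prod_unfold)
  qed
  moreover have "((\<lambda>p. ?H (diagonal_index p)) has_sum (\<Theta> * L)) UNIV = (?H has_sum (\<Theta> * L)) UNIV"
    by (rule has_sum_reindex_bij_witness[where i="\<lambda>(N, M). (int M - int N, min N M)" and j=diagonal_index])
       (auto simp: diagonal_index_def)
  ultimately show ?thesis
    by simp
qed

definition zindex_all :: "(nat list \<times> nat list) set" where
  "zindex_all = {(ls, ms). (\<forall>l\<in>set ls. 1 \<le> l) \<and> (\<forall>m\<in>set ms. 1 \<le> m)}"

lemma zindex_all_eq: "zindex_all = insert ([], []) zindex"
  unfolding zindex_all_def zindex_def by auto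

lemma has_sum_zterm_compositions:
  assumes Q: "0 < Q" "Q < 1" and y: "0 < y" "y \<le> 1" and z: "0 < z"
    and H: "((\<lambda>(N, M). z powr (real M - real N) * pair_weight Q y N M) has_sum S) UNIV"
  shows "(zterm Q z y has_sum S) zindex_all"
proof -
  let ?B = "\<lambda>(N, M). compositions N \<times> compositions M"
  have "((\<lambda>(_, p). zterm Q z y p) has_sum S) (Sigma UNIV ?B)"
  proof (rule has_sum_SigmaI_nonneg[OF _ H])
    show "((\<lambda>p. case (NM, p) of (_, p) \<Rightarrow> zterm Q z y p) has_sum
        (case NM of (N, M) \<Rightarrow> z powr (real M - real N) * pair_weight Q y N M)) (?B NM)" for NM
      using sum_zterm_compositions[OF Q(1) z]
      by (intro has_sum_finiteI) (auto simp: finite_compositions split: prod.split)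
  qed (use zterm_nonneg[OF Q z y] in auto)
  moreover have "((\<lambda>(_, p). zterm Q z y p) has_sum S) (Sigma UNIV ?B)
      = (zterm Q z y has_sum S) zindex_all"
    by (rule has_sum_reindex_bij_witness[where i="\<lambda>p. ((sum_list (fst p), sum_list (snd p)), p)" and j=snd])
       (auto simp: compositions_def zindex_all_def)
  ultimately show ?thesis
    by simp
qed

lemma has_prod_inverse_qpoch_ratio:
  fixes Q y :: real
  assumes L: "(\<lambda>n. qpoch ((1 - y) * Q) Q n / qpoch Q Q n) \<longlonglongrightarrow> L" "L \<noteq> 0"
  shows "(\<lambda>i. (1 - Q ^ Suc i) / (1 + (y - 1) * Q ^ Suc i)) has_prod (1 / L)"
proof -
  have "(\<Prod>i\<le>n. (1 - Q ^ Suc i) / (1 + (y - 1) * Q ^ Suc i))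
      = (\<Prod>i\<le>n. 1 - Q ^ Suc i) / (\<Prod>i\<le>n. 1 + (y - 1) * Q ^ Suc i)" for n
    by (rule prod_dividef)
  also have "\<dots> n = qpoch Q Q (Suc n) / qpoch ((1 - y) * Q) Q (Suc n)" for n
    unfolding qpoch_def lessThan_Suc_atMost by (simp add: algebra_simps)
  moreover have "(\<lambda>n. 1 / (qpoch ((1 - y) * Q) Q (Suc n) / qpoch Q Q (Suc n))) \<longlonglongrightarrow> 1 / L"
    using L by (intro tendsto_intros LIMSEQ_Suc) auto
  ultimately have "raw_has_prod (\<lambda>i. (1 - Q ^ Suc i) / (1 + (y - 1) * Q ^ Suc i)) 0 (1 / L)"
    using L(2) by (simp add: raw_has_prod_def)
  then show ?thesis
    unfolding has_prod_def by blast
qed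

lemma has_sum_zterm_imp_Zfun:
  assumes "(zterm Q z y has_sum S) zindex_all"
  shows "zterm Q z y summable_on zindex" "Zfun Q z y = S"
proof -
  have nil: "([], []) \<notin> zindex" "zterm Q z y ([], []) = 1"
    by (auto simp: zindex_def zterm_def zblock_def)
  have all: "(zterm Q z y has_sum S) (insert ([], []) zindex)"
    using assms by (simp add: zindex_all_eq)
  then show summable: "zterm Q z y summable_on zindex"
    by (meson has_sum_imp_summable subset_insertI summable_on_subset_banach)
  then have "(zterm Q z y has_sum (zterm Q z y ([], []) + infsum (zterm Q z y) zindex)) (insert ([], []) zindex)"
    by (rule has_sum_insert[OF nil(1) has_sum_infsum])
  then show "Zfun Q z y = S"
    unfolding Zfun_def using all nil(2) has_sum_unique by fastforce
qed

theorem theorem1p1: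
  fixes Q z y :: real
  assumes "0 < Q" "Q < 1" "0 < z" "0 < y" "y \<le> 1"
  shows "zterm Q z y summable_on zindex
    \<and> convergent_prod (\<lambda>i. (1 - Q ^ Suc i) / (1 + (y - 1) * Q ^ Suc i))
    \<and> ((\<lambda>m::int. Q powr (real_of_int (m * (m + 1)) / 2) * z powr (real_of_int m))
          has_sum (Zfun Q z y * (\<Prod>i. (1 - Q ^ Suc i) / (1 + (y - 1) * Q ^ Suc i)))) UNIV"
proof -
  note Q = assms(1,2) and z = assms(3) and y = assms(4,5)
  obtain L where L: "(\<lambda>n. qpoch ((1 - y) * Q) Q n / qpoch Q Q n) \<longlonglongrightarrow> L"
    using convergent_qpoch_ratio[OF Q y] by (auto simp: convergent_def)
  have "1 \<le> L"
    using LIMSEQ_le_const[OF L] qpoch_ratio_ge_1[OF Q y] by blast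
  obtain \<Theta> where theta: "(theta_term Q z has_sum \<Theta>) UNIV"
    using summable_on_theta_term[OF Q z] by (auto simp: summable_on_def)
  have "(zterm Q z y has_sum \<Theta> * L) zindex_all"
    by (rule has_sum_zterm_compositions[OF Q y z has_sum_pair_weight[OF Q y z L theta]])
  then have "zterm Q z y summable_on zindex" "Zfun Q z y = \<Theta> * L"
    by (rule has_sum_zterm_imp_Zfun)+
  moreover have "(\<lambda>i. (1 - Q ^ Suc i) / (1 + (y - 1) * Q ^ Suc i)) has_prod (1 / L)"
    using has_prod_inverse_qpoch_ratio[OF L] \<open>1 \<le> L\<close> by simp
  ultimately show ?thesis
    using theta \<open>1 \<le> L\<close> by (simp add: has_prod_iff theta_term_def[abs_def])
qed

end
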